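(* Let $\phi$ be a positive, trace-preserving linear map on $\mathcal M(d;\mathbb C)$ whose space of fixed points $\eta_\phi=\{X:\phi(X)=X\}$ has dimension strictly greater than $1$. Then $\phi$ admits a semipositive fixed point, i.e. a nonzero $A\ge 0$ with $\det A=0$ and $\phi(A)=A$.
   Context: A linear map is positive if it maps positive semidefinite matrices to positive semidefinite matrices. Every positive trace-preserving map has a positive semidefinite fixed point of unit trace, and it maps Hermitian matrices to Hermitian matrices. *)

theory Defs
  imports "HOL-Analysis.Analysis"
begin

text \<open>Complex d x d matrices are modelled as complex^'n^'n with 'n a finite index type
  (d = CARD('n)). Complex scalar multiplication of matrices:\<close>

definition mscale :: "complex \<Rightarrow> complex^'n^'n \<Rightarrow> complex^'n^'n" where
  "mscale c X = (\<chi> i j. c * X $ i $ j)"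

lemma vector_space_mscale: "vector_space mscale"
  by unfold_locales (simp_all add: mscale_def vec_eq_iff algebra_simps)

definition hermitian :: "complex^'n^'n \<Rightarrow> bool" where
  "hermitian A \<longleftrightarrow> (\<forall>i j. A $ i $ j = cnj (A $ j $ i))"

definition psd :: "complex^'n^'n \<Rightarrow> bool" where
  "psd A \<longleftrightarrow> hermitian A \<and>
     (\<forall>x :: complex^'n. 0 \<le> Re (\<Sum>i\<in>UNIV. \<Sum>j\<in>UNIV. cnj (x $ i) * A $ i $ j * x $ j))"

definition positive_map :: "(complex^'n^'n \<Rightarrow> complex^'n^'n) \<Rightarrow> bool" where
  "positive_map \<phi> \<longleftrightarrow> (\<forall>A. psd A \<longrightarrow> psd (\<phi> A))"

definition trace_preserving :: "(complex^'n^'n \<Rightarrow> complex^'n^'n) \<Rightarrow> bool" where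
  "trace_preserving \<phi> \<longleftrightarrow> (\<forall>X. trace (\<phi> X) = trace X)"

end

theory Submission
  imports Defs
begin

text \<open>Brouwer's theorem on the compact convex set of density matrices gives a fixed density
  matrix \<open>\<rho>\<close>. A positive map preserves Hermitian matrices, so it fixes the Hermitian real and
  imaginary parts of each fixed point; as the fixed-point space is not spanned by \<open>\<rho>\<close>, it contains a
  nonzero traceless Hermitian \<open>G\<close>. The fixed matrices \<open>\<rho> - t G\<close> all have trace one, so by boundedness
  they leave the density matrices at a largest \<open>t\<close>. There \<open>\<rho> - t G\<close> is singular: a nonsingular
  positive semidefinite matrix is positive definite, and stays positive semidefinite under small
  Hermitian perturbations.\<close>

subsection \<open>Hermitian matrices and sesquilinear forms\<close>

definition sesq :: "complex^'n^'n \<Rightarrow> complex^'n \<Rightarrow> complex^'n \<Rightarrow> complex" where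
  "sesq A x y = (\<Sum>i\<in>UNIV. \<Sum>j\<in>UNIV. cnj (x$i) * A$i$j * y$j)"

lemma psd_iff_sesq: "psd A \<longleftrightarrow> hermitian A \<and> (\<forall>x. 0 \<le> Re (sesq A x x))"
  by (simp add: psd_def sesq_def)

lemma scaleR_complex: "r *\<^sub>R (z::complex) = of_real r * z"
  by (rule scaleR_conv_of_real)

lemma hermitianI: "(\<And>i j. A$i$j = cnj (A$j$i)) \<Longrightarrow> hermitian A"
  unfolding hermitian_def by blast

lemma hermitian_cnj_entry: "hermitian A \<Longrightarrow> cnj (A$i$j) = A$j$i"
  unfolding hermitian_def by (metis complex_cnj_cnj)

lemma hermitian_diag_real: "hermitian A \<Longrightarrow> A$i$i \<in> \<real>"
  unfolding hermitian_def by (metis Reals_cnj_iff)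

lemma hermitian_add: "hermitian A \<Longrightarrow> hermitian B \<Longrightarrow> hermitian (A + B)"
  by (intro hermitianI) (simp add: hermitian_cnj_entry)

lemma hermitian_diff: "hermitian A \<Longrightarrow> hermitian B \<Longrightarrow> hermitian (A - B)"
  by (intro hermitianI) (simp add: hermitian_cnj_entry)

lemma hermitian_scaleR: "hermitian A \<Longrightarrow> hermitian (r *\<^sub>R A)"
  by (intro hermitianI) (simp add: hermitian_cnj_entry scaleR_complex)

lemma hermitian_mat_of_real: "hermitian (mat (of_real r))"
  by (intro hermitianI) (simp add: mat_def)

lemma trace_hermitian_real: "hermitian A \<Longrightarrow> trace A \<in> \<real>"
  unfolding trace_def by (intro sum_in_Reals hermitian_diag_real)

lemma trace_scaleR: "trace (r *\<^sub>R (A::complex^'n^'n)) = of_real r * trace A"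
  by (simp add: trace_def scaleR_complex sum_distrib_left)

lemma power2_norm_vec: "(norm (x::'a::real_normed_vector^'n))\<^sup>2 = (\<Sum>i\<in>UNIV. (norm (x$i))\<^sup>2)"
  by (simp add: norm_vec_def L2_set_def sum_nonneg)

lemma sum_cnj_mult_self: "(\<Sum>i\<in>UNIV. cnj (x$i) * x$i) = of_real ((norm (x::complex^'n))\<^sup>2)"
  unfolding power2_norm_vec of_real_sum
  by (rule sum.cong) (simp_all only: complex_norm_square mult.commute)

lemma sesq_add_left: "sesq A (x + y) z = sesq A x z + sesq A y z"
  by (simp add: sesq_def algebra_simps sum.distrib)

lemma sesq_add_right: "sesq A z (x + y) = sesq A z x + sesq A z y"
  by (simp add: sesq_def algebra_simps sum.distrib)

lemma sesq_scaleR_left: "sesq A (r *\<^sub>R x) z = of_real r * sesq A x z"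
  by (simp add: sesq_def scaleR_complex algebra_simps sum_distrib_left)

lemma sesq_scaleR_right: "sesq A z (r *\<^sub>R x) = of_real r * sesq A z x"
  by (simp add: sesq_def scaleR_complex algebra_simps sum_distrib_left)

lemma sesq_add_matrix: "sesq (A + B) x y = sesq A x y + sesq B x y"
  by (simp add: sesq_def algebra_simps sum.distrib)

lemma sesq_diff_matrix: "sesq (A - B) x y = sesq A x y - sesq B x y"
  by (simp add: sesq_def algebra_simps sum_subtractf)

lemma sesq_scaleR_matrix: "sesq (r *\<^sub>R A) x y = of_real r * sesq A x y"
  by (simp add: sesq_def scaleR_complex algebra_simps sum_distrib_left)

lemma sesq_axis: "sesq A (axis i a) (axis j b) = cnj a * A$i$j * b"
  unfolding sesq_def axis_def
  by (simp add: if_distrib[of "\<lambda>z. z * _"] if_distrib[of "\<lambda>z. _ * z"] if_distrib[of cnj] cong: if_cong)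

lemma sesq_matrix_vector_mult: "sesq A y x = (\<Sum>i\<in>UNIV. cnj (y$i) * (A *v x)$i)"
  by (simp add: sesq_def matrix_vector_mult_def sum_distrib_left algebra_simps)

lemma sesq_mat: "sesq (mat c) x x = c * of_real ((norm x)\<^sup>2)"
  unfolding sesq_def mat_def sum_cnj_mult_self[symmetric]
  by (simp add: if_distrib[of "\<lambda>z. z * _"] if_distrib[of "\<lambda>z. _ * z"] sum_distrib_left algebra_simps cong: if_cong)

lemma sesq_swap_hermitian:
  assumes "hermitian A"
  shows "sesq A y x = cnj (sesq A x y)"
proof -
  have "cnj (sesq A x y) = (\<Sum>i\<in>UNIV. \<Sum>j\<in>UNIV. x$i * A$j$i * cnj (y$j))"
    by (simp add: sesq_def hermitian_cnj_entry[OF assms])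
  also have "\<dots> = (\<Sum>j\<in>UNIV. \<Sum>i\<in>UNIV. x$i * A$j$i * cnj (y$j))"
    by (rule sum.swap)
  also have "\<dots> = sesq A y x"
    unfolding sesq_def by (intro sum.cong refl) (simp only: mult.commute mult.left_commute)
  finally show ?thesis by simp
qed

lemma sesq_self_add:
  "sesq A (x + y) (x + y) = sesq A x x + sesq A y y + sesq A x y + sesq A y x"
  by (simp add: sesq_add_left sesq_add_right algebra_simps)

lemma norm_sesq_le:
  "cmod (sesq A x x) \<le> (\<Sum>i\<in>UNIV. \<Sum>j\<in>UNIV. cmod (A$i$j)) * (norm x)\<^sup>2"
proof -
  have "cmod (sesq A x x) \<le> (\<Sum>i\<in>UNIV. \<Sum>j\<in>UNIV. cmod (cnj (x$i) * A$i$j * x$j))"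
    unfolding sesq_def by (rule order_trans[OF norm_sum sum_mono]) (rule norm_sum)
  also have "\<dots> \<le> (\<Sum>i\<in>UNIV. \<Sum>j\<in>UNIV. cmod (A$i$j) * (norm x)\<^sup>2)"
  proof (intro sum_mono)
    fix i j
    have "cmod (x$i) * cmod (x$j) \<le> norm x * norm x"
      using Finite_Cartesian_Product.norm_nth_le by (intro mult_mono) auto
    then have "cmod (A$i$j) * (cmod (x$i) * cmod (x$j)) \<le> cmod (A$i$j) * (norm x)\<^sup>2"
      by (simp add: power2_eq_square mult_left_mono)
    then show "cmod (cnj (x$i) * A$i$j * x$j) \<le> cmod (A$i$j) * (norm x)\<^sup>2"
      by (simp add: norm_mult mult_ac)
  qed
  also have "\<dots> = (\<Sum>i\<in>UNIV. \<Sum>j\<in>UNIV. cmod (A$i$j)) * (norm x)\<^sup>2"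
    by (simp add: sum_distrib_right)
  finally show ?thesis .
qed

lemma continuous_on_sesq_self: "continuous_on S (\<lambda>x. Re (sesq A x x))"
  unfolding sesq_def by (intro continuous_intros)

subsection \<open>Positive semidefinite matrices\<close>

lemma psd_diag_nonneg:
  assumes "psd A"
  shows "0 \<le> Re (A$i$i)"
proof -
  have "0 \<le> Re (sesq A (axis i 1) (axis i 1))" using assms by (simp add: psd_iff_sesq)
  then show ?thesis by (simp add: sesq_axis)
qed

lemma psd_entry_bound:
  assumes "psd A"
  shows "2 * cmod (A$i$j) \<le> Re (A$i$i) + Re (A$j$j)"
proof (cases "A$i$j = 0")
  case True
  then show ?thesis using psd_diag_nonneg[OF assms, of i] psd_diag_nonneg[OF assms, of j] by simp
next
  case False
  define a where "a = A$i$j"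
  define u where "u = cnj a / of_real (cmod a)"
  have na: "cmod a \<noteq> 0" using False by (simp add: a_def)
  have "a * cnj a = of_real (cmod a) * of_real (cmod a)"
    using complex_norm_square[of a] by (simp add: power2_eq_square)
  then have au: "a * u = of_real (cmod a)"
    using na by (simp add: u_def mult.assoc[symmetric] times_divide_eq_right del: complex_mult_cnj)
  have uu: "cnj u * u = 1"
    using na by (simp add: u_def complex_norm_square[symmetric] power2_eq_square field_simps)
  have herm: "hermitian A" using assms by (simp add: psd_def)
  \<comment> \<open>Test the form on \<open>e\<^sub>i - u e\<^sub>j\<close>, with the phase \<open>u\<close> chosen so that the cross terms are \<open>-2 |a|\<close>.\<close>
  let ?x = "axis i (1::complex)" and ?y = "axis j (- u)"
  have xy: "sesq A ?x ?y = - of_real (cmod a)" by (simp add: sesq_axis a_def[symmetric] au[symmetric])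
  have "0 \<le> Re (sesq A (?x + ?y) (?x + ?y))" using assms by (simp add: psd_iff_sesq)
  also have "sesq A (?x + ?y) (?x + ?y) = A$i$i + cnj u * u * A$j$j + sesq A ?x ?y + cnj (sesq A ?x ?y)"
    unfolding sesq_self_add sesq_swap_hermitian[OF herm, of ?y ?x] by (simp add: sesq_axis)
  finally show ?thesis using uu xy by (simp add: a_def)
qed

lemma linear_coeff_eq_0_if_nonneg:
  fixes a b :: real
  assumes "\<And>s. 0 \<le> a * s\<^sup>2 + b * s"
  shows "b = 0"
proof -
  define k where "k = \<bar>a\<bar> + 1"
  have k: "0 < k" "a - k < 0" by (auto simp: k_def)
  have "0 \<le> a * (- b / k)\<^sup>2 + b * (- b / k)" by (rule assms)
  also have "\<dots> = b\<^sup>2 * (a - k) / k\<^sup>2" using k by (simp add: field_simps power2_eq_square)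
  finally have "0 \<le> b\<^sup>2 * (a - k)" using k by (simp add: zero_le_divide_iff)
  then have "b\<^sup>2 \<le> 0" using k by (simp add: zero_le_mult_iff)
  then show ?thesis by simp
qed

lemma psd_matrix_vector_mult_eq_0:
  assumes "psd A" "Re (sesq A x x) = 0"
  shows "A *v x = 0"
proof -
  define y where "y = A *v x"
  have herm: "hermitian A" using assms by (simp add: psd_def)
  have yx: "sesq A y x = of_real ((norm y)\<^sup>2)"
    by (simp add: sesq_matrix_vector_mult y_def[symmetric] sum_cnj_mult_self)
  have xy: "sesq A x y = of_real ((norm y)\<^sup>2)"
    using sesq_swap_hermitian[OF herm, of x y] yx by simp
  have "0 \<le> Re (sesq A y y) * s\<^sup>2 + 2 * (norm y)\<^sup>2 * s" for s
  proof -
    have "0 \<le> Re (sesq A (x + s *\<^sub>R y) (x + s *\<^sub>R y))" using assms(1) by (simp add: psd_iff_sesq)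
    also have "\<dots> = Re (sesq A x x) + Re (sesq A y y) * s\<^sup>2 + 2 * (norm y)\<^sup>2 * s"
      by (simp add: sesq_self_add sesq_scaleR_left sesq_scaleR_right xy yx power2_eq_square algebra_simps)
    finally show ?thesis using assms(2) by simp
  qed
  then have "2 * (norm y)\<^sup>2 = 0" by (rule linear_coeff_eq_0_if_nonneg)
  then show ?thesis by (simp add: y_def)
qed

lemma psd_nonsingular_pos:
  assumes "psd A" "det A \<noteq> 0" "x \<noteq> 0"
  shows "0 < Re (sesq A x x)"
proof -
  have "A *v x \<noteq> 0"
    using assms(2,3) invertible_det_nz inj_matrix_vector_mult by (metis injD matrix_vector_mult_0_right)
  then have "Re (sesq A x x) \<noteq> 0" using psd_matrix_vector_mult_eq_0[OF assms(1)] by blast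
  moreover have "0 \<le> Re (sesq A x x)" using assms(1) by (simp add: psd_iff_sesq)
  ultimately show ?thesis by simp
qed

lemma psd_iff_nonneg_on_sphere:
  assumes "hermitian A"
  shows "psd A \<longleftrightarrow> (\<forall>u\<in>sphere 0 1. 0 \<le> Re (sesq A u u))"
proof -
  have "0 \<le> Re (sesq A x x)" if sphere: "\<forall>u\<in>sphere 0 1. 0 \<le> Re (sesq A u u)" for x
  proof (cases "x = 0")
    case True
    then show ?thesis by (simp add: sesq_def)
  next
    case False
    define u where "u = (1 / norm x) *\<^sub>R x"
    have xu: "x = norm x *\<^sub>R u" using False by (simp add: u_def)
    have "Re (sesq A x x) = (norm x)\<^sup>2 * Re (sesq A u u)"
      by (subst (1 2) xu) (simp add: sesq_scaleR_left sesq_scaleR_right power2_eq_square)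
    moreover have "u \<in> sphere 0 1" using False by (simp add: u_def)
    ultimately show ?thesis using sphere by simp
  qed
  then show ?thesis using assms by (auto simp: psd_iff_sesq)
qed

lemma psd_nonsingular_diff_hermitian:
  assumes "psd A" "det A \<noteq> 0" "hermitian G"
  obtains e where "0 < e" "psd (A - e *\<^sub>R G)"
proof -
  have "compact (sphere (0::complex^'n) 1)" "sphere (0::complex^'n) 1 \<noteq> {}" by simp_all
  then obtain x0 where x0: "x0 \<in> sphere 0 1"
    and min: "\<And>u. u \<in> sphere 0 1 \<Longrightarrow> Re (sesq A x0 x0) \<le> Re (sesq A u u)"
    using continuous_attains_inf[OF _ _ continuous_on_sesq_self] by metis
  define c where "c = Re (sesq A x0 x0)"
  define M where "M = (\<Sum>i\<in>UNIV. \<Sum>j\<in>UNIV. cmod (G$i$j))"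
  define e where "e = c / (M + 1)"
  have c: "0 < c" unfolding c_def using x0 by (intro psd_nonsingular_pos assms) auto
  have M: "0 \<le> M" by (simp add: M_def sum_nonneg)
  have e: "0 < e" "e * M < c" using c M by (simp_all add: e_def field_simps)
  have "0 \<le> Re (sesq (A - e *\<^sub>R G) u u)" if u: "u \<in> sphere 0 1" for u
  proof -
    have "Re (sesq G u u) \<le> M"
      using norm_sesq_le[of G u] u complex_Re_le_cmod[of "sesq G u u"] by (simp add: M_def)
    then have "e * Re (sesq G u u) \<le> e * M" using e by simp
    moreover have "c \<le> Re (sesq A u u)" using min[OF u] by (simp add: c_def)
    ultimately have "e * Re (sesq G u u) \<le> Re (sesq A u u)" using e by linarith
    then show ?thesis by (simp add: sesq_diff_matrix sesq_scaleR_matrix)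
  qed
  moreover have "hermitian (A - e *\<^sub>R G)"
    using assms by (intro hermitian_diff hermitian_scaleR) (auto simp: psd_def)
  ultimately show thesis using e by (intro that[of e]) (simp_all add: psd_iff_nonneg_on_sphere)
qed

subsection \<open>Density matrices\<close>

definition density_matrices :: "(complex^'n^'n) set" where
  "density_matrices = {A. psd A \<and> trace A = 1}"

lemma density_matrix_entry_bound:
  assumes "A \<in> density_matrices"
  shows "cmod (A$i$j) \<le> 1"
proof -
  have psd: "psd A" and tr: "trace A = 1" using assms by (auto simp: density_matrices_def)
  have diag_le: "Re (A$k$k) \<le> 1" for k
  proof -
    have "Re (A$k$k) \<le> (\<Sum>l\<in>UNIV. Re (A$l$l))"
      by (rule member_le_sum) (auto intro: psd_diag_nonneg[OF psd])
    also have "\<dots> = 1" using tr by (simp add: trace_def Re_sum[symmetric])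
    finally show ?thesis .
  qed
  show ?thesis using psd_entry_bound[OF psd, of i j] diag_le[of i] diag_le[of j] by simp
qed

lemma norm_matrix_le_sum_entries: "norm (A::complex^'n^'n) \<le> (\<Sum>i\<in>UNIV. \<Sum>j\<in>UNIV. cmod (A$i$j))"
proof -
  have "norm A \<le> (\<Sum>i\<in>UNIV. norm (A$i))" by (simp add: norm_vec_def L2_set_le_sum)
  also have "\<dots> \<le> (\<Sum>i\<in>UNIV. \<Sum>j\<in>UNIV. cmod (A$i$j))"
    by (rule sum_mono) (simp add: norm_vec_def L2_set_le_sum)
  finally show ?thesis .
qed

lemma bounded_density_matrices: "bounded (density_matrices :: (complex^'n^'n) set)"
proof -
  have "norm A \<le> real CARD('n) * real CARD('n)" if "A \<in> density_matrices" for A :: "complex^'n^'n"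
  proof -
    have "(\<Sum>i\<in>UNIV. \<Sum>j\<in>UNIV. cmod (A$i$j)) \<le> (\<Sum>i\<in>(UNIV::'n set). \<Sum>j\<in>(UNIV::'n set). 1::real)"
      by (intro sum_mono density_matrix_entry_bound[OF that])
    then show ?thesis using norm_matrix_le_sum_entries[of A] by simp
  qed
  then show ?thesis unfolding bounded_iff by blast
qed

lemma closed_density_matrices: "closed (density_matrices :: (complex^'n^'n) set)"
proof -
  have eq: "density_matrices = (\<Inter>i. \<Inter>j. {A::complex^'n^'n. A$i$j = cnj (A$j$i)}) \<inter>
      (\<Inter>x. {A. 0 \<le> Re (sesq A x x)}) \<inter> {A. trace A = 1}"
    unfolding density_matrices_def psd_iff_sesq hermitian_def by blast
  have "closed {A::complex^'n^'n. A$i$j = cnj (A$j$i)}" for i j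
    by (intro closed_Collect_eq continuous_intros)
  moreover have "closed {A::complex^'n^'n. 0 \<le> Re (sesq A x x)}" for x
    unfolding sesq_def by (intro closed_Collect_le continuous_intros)
  moreover have "closed {A::complex^'n^'n. trace A = 1}"
    unfolding trace_def by (intro closed_Collect_eq continuous_intros)
  ultimately show ?thesis unfolding eq by (intro closed_Int closed_INT ballI)
qed

lemma compact_density_matrices: "compact (density_matrices :: (complex^'n^'n) set)"
  using bounded_density_matrices closed_density_matrices by (simp add: compact_eq_bounded_closed)

lemma convex_density_matrices: "convex (density_matrices :: (complex^'n^'n) set)"
  unfolding convex_def
proof (intro ballI allI impI)
  fix A B :: "complex^'n^'n" and u v :: real
  assume "A \<in> density_matrices" "B \<in> density_matrices" and uv: "0 \<le> u" "0 \<le> v" "u + v = 1"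
  then have A: "psd A" "trace A = 1" and B: "psd B" "trace B = 1" by (auto simp: density_matrices_def)
  have "hermitian (u *\<^sub>R A + v *\<^sub>R B)" using A B
    by (intro hermitian_add hermitian_scaleR) (auto simp: psd_def)
  moreover have "0 \<le> Re (sesq (u *\<^sub>R A + v *\<^sub>R B) x x)" for x
    using A B uv by (simp add: psd_iff_sesq sesq_add_matrix sesq_scaleR_matrix)
  moreover have "trace (u *\<^sub>R A + v *\<^sub>R B) = 1" using A B uv
    by (simp add: trace_add trace_scaleR) (metis of_real_add of_real_1)
  ultimately show "u *\<^sub>R A + v *\<^sub>R B \<in> density_matrices"
    by (simp add: density_matrices_def psd_iff_sesq)
qed

lemma psd_mat_of_real: "0 \<le> c \<Longrightarrow> psd (mat (of_real c))"
  by (simp add: psd_iff_sesq hermitian_mat_of_real sesq_mat)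

lemma maximally_mixed_density_matrix:
  "mat (of_real (1 / real CARD('n))) \<in> (density_matrices :: (complex^'n^'n) set)"
proof -
  have "psd (mat (of_real (1 / real CARD('n))) :: complex^'n^'n)" by (rule psd_mat_of_real) simp
  then show ?thesis by (simp add: density_matrices_def trace_def mat_def)
qed

subsection \<open>Positive maps and their fixed points\<close>

lemma psd_add_mat_of_real:
  assumes "hermitian H" "(\<Sum>i\<in>UNIV. \<Sum>j\<in>UNIV. cmod (H$i$j)) \<le> c"
  shows "psd (H + mat (of_real c))"
proof -
  have "0 \<le> Re (sesq H x x) + c * (norm x)\<^sup>2" for x
  proof -
    have "- Re (sesq H x x) \<le> (\<Sum>i\<in>UNIV. \<Sum>j\<in>UNIV. cmod (H$i$j)) * (norm x)\<^sup>2"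
      using norm_sesq_le[of H x] abs_Re_le_cmod[of "sesq H x x"] by linarith
    also have "\<dots> \<le> c * (norm x)\<^sup>2" using assms(2) by (simp add: mult_right_mono)
    finally show ?thesis by simp
  qed
  then show ?thesis
    using assms(1) by (simp add: psd_iff_sesq hermitian_add hermitian_mat_of_real sesq_add_matrix sesq_mat)
qed

lemma positive_map_hermitian:
  assumes "Vector_Spaces.linear mscale mscale \<phi>" "positive_map \<phi>" "hermitian H"
  shows "hermitian (\<phi> H)"
proof -
  interpret Vector_Spaces.linear mscale mscale \<phi> by (rule assms(1))
  define c where "c = (\<Sum>i\<in>UNIV. \<Sum>j\<in>UNIV. cmod (H$i$j))"
  have "psd (\<phi> (H + mat (of_real c)))" "psd (\<phi> (mat (of_real c)))"
    using assms(2,3) psd_add_mat_of_real[of H c] psd_mat_of_real[of c]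
    by (auto simp: positive_map_def c_def sum_nonneg)
  moreover have "\<phi> H = \<phi> (H + mat (of_real c)) - \<phi> (mat (of_real c))" by (simp add: add)
  ultimately show ?thesis by (simp add: psd_def hermitian_diff)
qed

definition herm_re :: "complex^'n^'n \<Rightarrow> complex^'n^'n" where
  "herm_re X = (\<chi> i j. (X$i$j + cnj (X$j$i)) / 2)"

definition herm_im :: "complex^'n^'n \<Rightarrow> complex^'n^'n" where
  "herm_im X = (\<chi> i j. (X$i$j - cnj (X$j$i)) / (2 * \<i>))"

lemma hermitian_herm_re: "hermitian (herm_re X)"
  by (intro hermitianI) (simp add: herm_re_def add.commute)

lemma hermitian_herm_im: "hermitian (herm_im X)"
  by (intro hermitianI) (simp add: herm_im_def field_simps)

lemma herm_re_im_decomp: "X = herm_re X + mscale \<i> (herm_im X)"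
  by (simp add: herm_re_def herm_im_def mscale_def vec_eq_iff field_simps)

lemma hermitian_decomp_eq_0:
  assumes "hermitian A" "hermitian B" "A + mscale \<i> B = 0"
  shows "A = 0 \<and> B = 0"
proof -
  have "A$i$j = 0 \<and> B$i$j = 0" for i j
  proof -
    have "A$i$j + \<i> * B$i$j = 0" "A$j$i + \<i> * B$j$i = 0"
      using assms(3) by (simp_all add: mscale_def vec_eq_iff)
    moreover have "cnj (A$j$i + \<i> * B$j$i) = A$i$j - \<i> * B$i$j"
      by (simp add: hermitian_cnj_entry[OF assms(1)] hermitian_cnj_entry[OF assms(2)])
    ultimately have "A$i$j + \<i> * B$i$j = 0" "A$i$j - \<i> * B$i$j = 0" by simp_all
    then have "2 * A$i$j = 0" "2 * \<i> * B$i$j = 0" by (simp_all add: algebra_simps)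
    then show ?thesis by simp
  qed
  then show ?thesis by (simp add: vec_eq_iff)
qed

lemma fixed_herm_re_im:
  assumes "Vector_Spaces.linear mscale mscale \<phi>" "positive_map \<phi>" "\<phi> X = X"
  shows "\<phi> (herm_re X) = herm_re X \<and> \<phi> (herm_im X) = herm_im X"
proof -
  interpret Vector_Spaces.linear mscale mscale \<phi> by (rule assms(1))
  have "\<phi> (herm_re X) + mscale \<i> (\<phi> (herm_im X)) = \<phi> (herm_re X + mscale \<i> (herm_im X))"
    by (simp add: add scale)
  also have "\<dots> = \<phi> X" by (simp flip: herm_re_im_decomp)
  also have "\<dots> = herm_re X + mscale \<i> (herm_im X)" using assms(3) herm_re_im_decomp by (rule trans)
  finally have "\<phi> (herm_re X) + mscale \<i> (\<phi> (herm_im X)) = herm_re X + mscale \<i> (herm_im X)" .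
  then have "(\<phi> (herm_re X) - herm_re X) + mscale \<i> (\<phi> (herm_im X) - herm_im X) = 0"
    by (simp add: mscale_def vec_eq_iff algebra_simps)
  moreover have "hermitian (\<phi> (herm_re X) - herm_re X)" "hermitian (\<phi> (herm_im X) - herm_im X)"
    by (intro hermitian_diff positive_map_hermitian[OF assms(1,2)] hermitian_herm_re hermitian_herm_im)+
  ultimately show ?thesis using hermitian_decomp_eq_0 by fastforce
qed

lemma scaleR_eq_mscale: "r *\<^sub>R (X::complex^'n^'n) = mscale (of_real r) X"
  by (simp add: mscale_def vec_eq_iff scaleR_complex)

lemma linear_if_mscale_linear:
  assumes "Vector_Spaces.linear mscale mscale \<phi>"
  shows "linear \<phi>"
proof -
  interpret Vector_Spaces.linear mscale mscale \<phi> by (rule assms)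
  show ?thesis by (rule linearI) (simp_all add: add scaleR_eq_mscale scale)
qed

lemma fixed_density_matrix:
  assumes "Vector_Spaces.linear mscale mscale \<phi>" "positive_map \<phi>" "trace_preserving \<phi>"
  obtains \<rho> where "\<rho> \<in> density_matrices" "\<phi> \<rho> = \<rho>"
proof (rule brouwer[OF compact_density_matrices convex_density_matrices])
  show "density_matrices \<noteq> {}" using maximally_mixed_density_matrix by blast
  show "continuous_on density_matrices \<phi>"
    using linear_if_mscale_linear[OF assms(1)] by (simp add: linear_continuous_on linear_conv_bounded_linear)
  show "\<phi> \<in> density_matrices \<rightarrow> density_matrices"
    using assms(2,3) by (auto simp: density_matrices_def positive_map_def trace_preserving_def)
qed (rule that)

lemma fixed_traceless_hermitian:
  assumes lin: "Vector_Spaces.linear mscale mscale \<phi>" and pos: "positive_map \<phi>"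
    and dim: "vector_space.dim mscale {X. \<phi> X = X} > 1"
    and \<rho>: "hermitian \<rho>" "trace \<rho> = 1" "\<phi> \<rho> = \<rho>"
  obtains G where "hermitian G" "G \<noteq> 0" "trace G = 0" "\<phi> G = G"
proof -
  interpret V: vector_space mscale by (rule vector_space_mscale)
  have "\<not> {X. \<phi> X = X} \<subseteq> V.span {\<rho>}"
    using V.dim_le_card[of "{X. \<phi> X = X}" "{\<rho>}"] dim by auto
  then obtain X where X: "\<phi> X = X" "X \<notin> V.span {\<rho>}" by blast
  have "herm_re X \<notin> V.span {\<rho>} \<or> herm_im X \<notin> V.span {\<rho>}"
  proof (rule ccontr)
    assume "\<not> ?thesis"
    then have "herm_re X + mscale \<i> (herm_im X) \<in> V.span {\<rho>}" by (auto intro: V.span_add V.span_scale)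
    then show False using X(2) herm_re_im_decomp[of X, symmetric] by simp
  qed
  then obtain H where H: "hermitian H" "\<phi> H = H" "H \<notin> V.span {\<rho>}"
    using fixed_herm_re_im[OF lin pos X(1)] hermitian_herm_re hermitian_herm_im by blast
  define G where "G = H - Re (trace H) *\<^sub>R \<rho>"
  have "hermitian G" unfolding G_def using H(1) \<rho>(1) by (intro hermitian_diff hermitian_scaleR)
  moreover have "trace G = 0"
    using trace_hermitian_real[OF H(1)] \<rho>(2) by (simp add: G_def trace_sub trace_scaleR)
  moreover have "\<phi> G = G"
    using linear_if_mscale_linear[OF lin] H(2) \<rho>(3) by (simp add: G_def linear_diff linear_scale)
  moreover have "G \<noteq> 0"
  proof
    assume "G = 0"
    then have "H = mscale (of_real (Re (trace H))) \<rho>" by (simp add: G_def scaleR_eq_mscale)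
    also have "\<dots> \<in> V.span {\<rho>}" by (intro V.span_scale V.span_base) simp
    finally show False using H(3) by simp
  qed
  ultimately show thesis using that by blast
qed

lemma density_matrix_singular_on_ray:
  fixes \<rho> G :: "complex^'n^'n"
  assumes \<rho>: "\<rho> \<in> density_matrices" and G: "hermitian G" "G \<noteq> 0" "trace G = 0"
  obtains t where "\<rho> - t *\<^sub>R G \<in> density_matrices" "det (\<rho> - t *\<^sub>R G) = 0"
proof -
  define f where "f t = \<rho> - t *\<^sub>R G" for t
  define S where "S = {t. 0 \<le> t \<and> f t \<in> density_matrices}"
  have trace_f: "trace (f t) = 1" for t
    using \<rho> G(3) by (simp add: f_def density_matrices_def trace_sub trace_scaleR)
  obtain K where K: "\<And>A. A \<in> (density_matrices :: (complex^'n^'n) set) \<Longrightarrow> norm A \<le> K"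
    using bounded_density_matrices unfolding bounded_iff by blast
  have "t \<le> 2 * K / norm G" if "t \<in> S" for t
  proof -
    have "t * norm G = norm (\<rho> - f t)" using that by (simp add: S_def f_def)
    also have "\<dots> \<le> 2 * K" using K[OF \<rho>] K[of "f t"] that norm_triangle_ineq4[of \<rho> "f t"]
      by (simp add: S_def)
    finally show ?thesis using G(2) by (simp add: field_simps)
  qed
  then have "bdd_above S" by (rule bdd_aboveI)
  have "closed S"
  proof -
    have "continuous_on UNIV f" unfolding f_def by (intro continuous_intros)
    then have "closed (f -` density_matrices)" by (rule closed_vimage[OF closed_density_matrices])
    moreover have "S = {0..} \<inter> f -` density_matrices" by (auto simp: S_def)
    ultimately show ?thesis by (simp add: closed_Int)
  qed
  have "0 \<in> S" using \<rho> by (simp add: S_def f_def)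
  define t where "t = Sup S"
  have "t \<in> S" unfolding t_def using \<open>0 \<in> S\<close> \<open>bdd_above S\<close> \<open>closed S\<close>
    by (intro closed_contains_Sup) auto
  then have t: "f t \<in> density_matrices" by (simp add: S_def)
  moreover have "det (f t) = 0"
  proof (rule ccontr)
    assume "det (f t) \<noteq> 0"
    \<comment> \<open>A nonsingular \<open>f t\<close> could be pushed further along the ray, beyond the supremum.\<close>
    moreover have "psd (f t)" using t by (simp add: density_matrices_def)
    ultimately obtain e where e: "0 < e" "psd (f t - e *\<^sub>R G)"
      using psd_nonsingular_diff_hermitian G(1) by blast
    have "f (t + e) = f t - e *\<^sub>R G" by (simp add: f_def algebra_simps)
    then have "t + e \<in> S" using e \<open>t \<in> S\<close> trace_f[of "t + e"] by (simp add: S_def density_matrices_def)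
    then have "t + e \<le> t" unfolding t_def using \<open>bdd_above S\<close> by (rule cSup_upper)
    then show False using e by simp
  qed
  ultimately show thesis using that[of t] by (simp add: f_def)
qed

theorem mainTheorem6:
  fixes \<phi> :: "complex^'n^'n \<Rightarrow> complex^'n^'n"
  assumes "Vector_Spaces.linear mscale mscale \<phi>"
    and "positive_map \<phi>"
    and "trace_preserving \<phi>"
    and "vector_space.dim mscale {X. \<phi> X = X} > 1"
  shows "\<exists>A. A \<noteq> 0 \<and> psd A \<and> det A = 0 \<and> \<phi> A = A"
proof -
  obtain \<rho> where \<rho>: "\<rho> \<in> density_matrices" "\<phi> \<rho> = \<rho>"
    using fixed_density_matrix[OF assms(1-3)] .
  then have "hermitian \<rho>" "trace \<rho> = 1" by (auto simp: density_matrices_def psd_def)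
  then obtain G where G: "hermitian G" "G \<noteq> 0" "trace G = 0" "\<phi> G = G"
    using fixed_traceless_hermitian[OF assms(1,2,4)] \<rho>(2) by blast
  obtain t where A: "\<rho> - t *\<^sub>R G \<in> density_matrices" "det (\<rho> - t *\<^sub>R G) = 0"
    using density_matrix_singular_on_ray[OF \<rho>(1) G(1-3)] .
  have "\<phi> (\<rho> - t *\<^sub>R G) = \<rho> - t *\<^sub>R G"
    using linear_if_mscale_linear[OF assms(1)] \<rho>(2) G(4) by (simp add: linear_diff linear_scale)
  moreover have "\<rho> - t *\<^sub>R G \<noteq> 0"
    using A(1) by (auto simp: density_matrices_def trace_def)
  ultimately show ?thesis using A by (intro exI[of _ "\<rho> - t *\<^sub>R G"]) (auto simp: density_matrices_def)
qed

end
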